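(* Let $R$ be a Hecke symmetry with parameter $q$ on a finite dimensional vector space $V$, let $\mathbb T=\mathbb T(V)$ be the tensor algebra and $I$ its ideal generated by $\operatorname{Ker}(R-q\,\mathrm{id})\subset V^{\otimes2}$ (so $\Lambda(V,R)=\mathbb T/I$). Fix $n>1$ and put $L_k=\{a\in\mathbb T_k: a\,\mathbb T_{n-k}\subset I_n\}$ for $0\le k<n$, and $$y_k=\sum_{j=0}^{k-1}(-1)^{j}q^{\,k-1-j}\,T_1T_2\cdots T_j\in\mathcal H_k\quad(k>0),$$ (the $j=0$ term being $q^{k-1}$), acting on $\mathbb T_k=V^{\otimes k}$ via $R$. Then for $0<k<n$ one has $y_kL_k\subset V\otimes L_{k-1}$.
   Context: A Hecke symmetry with parameter $0\neq q\in\Bbbk$ on $V$ is a linear operator $R$ on $V\otimes V$ with $(R+\mathrm{id})(R-q\,\mathrm{id})=0$ and $(R\otimes\mathrm{id})(\mathrm{id}\otimes R)(R\otimes\mathrm{id})=(\mathrm{id}\otimes R)(R\otimes\mathrm{id})(\mathrm{id}\otimes R)$. The Hecke algebra $\mathcal H_k(q)$ acts on $V^{\otimes k}$ with $T_i$ acting by $\mathrm{id}^{\otimes(i-1)}\otimes R\otimes\mathrm{id}^{\otimes(k-i-1)}$. Subscripts denote homogeneous components; $\mathbb T_0=\Bbbk$. *)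

theory Defs
  imports Main
begin

text \<open>Coordinates: V = k^d with basis e_0,...,e_(d-1).  A tensor in the tensor
algebra T(V) is a finitely supported function on words (lists) over {..<d};
the value at the word [i1,...,im] is the coefficient of e_i1 (x) ... (x) e_im.\<close>

definition Tall :: "nat \<Rightarrow> (nat list \<Rightarrow> 'a::field) set" where
  "Tall d = {f. finite {w. f w \<noteq> 0} \<and> (\<forall>w. f w \<noteq> 0 \<longrightarrow> set w \<subseteq> {..<d})}"

definition Tk :: "nat \<Rightarrow> nat \<Rightarrow> (nat list \<Rightarrow> 'a::field) set" where
  "Tk d k = {f \<in> Tall d. \<forall>w. f w \<noteq> 0 \<longrightarrow> length w = k}"

definition tmul :: "(nat list \<Rightarrow> 'a::field) \<Rightarrow> (nat list \<Rightarrow> 'a) \<Rightarrow> nat list \<Rightarrow> 'a" where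
  "tmul f g = (\<lambda>w. \<Sum>j\<le>length w. f (take j w) * g (drop j w))"

inductive_set lin_span :: "(nat list \<Rightarrow> 'a::field) set \<Rightarrow> (nat list \<Rightarrow> 'a) set"
  for S where
  zero: "(\<lambda>w. 0) \<in> lin_span S"
| step: "x \<in> S \<Longrightarrow> a \<in> lin_span S \<Longrightarrow> (\<lambda>w. c * x w + a w) \<in> lin_span S"

text \<open>The linear operator R on V (x) V is given by its matrix:
  R (e_a (x) e_b) = sum_(c,e) Rm c e a b * e_c (x) e_e.
  T_i (1 \<le> i < k) acts on V^{(x)k} as id^(i-1) (x) R (x) id^(k-i-1).\<close>
definition Tact :: "nat \<Rightarrow> (nat \<Rightarrow> nat \<Rightarrow> nat \<Rightarrow> nat \<Rightarrow> 'a::field) \<Rightarrow> nat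
    \<Rightarrow> (nat list \<Rightarrow> 'a) \<Rightarrow> nat list \<Rightarrow> 'a" where
  "Tact d Rm i f = (\<lambda>w. if set w \<subseteq> {..<d} \<and> 1 \<le> i \<and> i < length w
      then (\<Sum>a<d. \<Sum>b<d. Rm (w ! (i - 1)) (w ! i) a b * f (w[i - 1 := a, i := b]))
      else 0)"

text \<open>The operator T_1 T_2 ... T_j (T_j applied first).\<close>
fun Tprod :: "nat \<Rightarrow> (nat \<Rightarrow> nat \<Rightarrow> nat \<Rightarrow> nat \<Rightarrow> 'a::field) \<Rightarrow> nat
    \<Rightarrow> (nat list \<Rightarrow> 'a) \<Rightarrow> nat list \<Rightarrow> 'a" where
  "Tprod d Rm 0 f = f"
| "Tprod d Rm (Suc j) f = Tprod d Rm j (Tact d Rm (Suc j) f)"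

abbreviation Rop where "Rop d Rm \<equiv> Tact d Rm 1"

definition is_hecke_symmetry :: "nat \<Rightarrow> (nat \<Rightarrow> nat \<Rightarrow> nat \<Rightarrow> nat \<Rightarrow> 'a::field) \<Rightarrow> 'a \<Rightarrow> bool" where
  "is_hecke_symmetry d Rm q \<longleftrightarrow> q \<noteq> 0 \<and>
     (\<forall>f \<in> Tk d 2. let g = (\<lambda>w. Rop d Rm f w - q * f w) in
        (\<forall>w. Rop d Rm g w + g w = 0)) \<and>
     (\<forall>f \<in> Tk d 3. Tact d Rm 1 (Tact d Rm 2 (Tact d Rm 1 f))
                 = Tact d Rm 2 (Tact d Rm 1 (Tact d Rm 2 f)))"

definition Kq :: "nat \<Rightarrow> (nat \<Rightarrow> nat \<Rightarrow> nat \<Rightarrow> nat \<Rightarrow> 'a::field) \<Rightarrow> 'a \<Rightarrow> (nat list \<Rightarrow> 'a) set" where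
  "Kq d Rm q = {x \<in> Tk d 2. \<forall>w. Rop d Rm x w - q * x w = 0}"

definition Iid :: "nat \<Rightarrow> (nat \<Rightarrow> nat \<Rightarrow> nat \<Rightarrow> nat \<Rightarrow> 'a::field) \<Rightarrow> 'a \<Rightarrow> (nat list \<Rightarrow> 'a) set" where
  "Iid d Rm q = lin_span {tmul (tmul u x) v | u x v. u \<in> Tall d \<and> x \<in> Kq d Rm q \<and> v \<in> Tall d}"

definition Lk :: "nat \<Rightarrow> (nat \<Rightarrow> nat \<Rightarrow> nat \<Rightarrow> nat \<Rightarrow> 'a::field) \<Rightarrow> 'a \<Rightarrow> nat \<Rightarrow> nat \<Rightarrow> (nat list \<Rightarrow> 'a) set" where
  "Lk d Rm q n k = {a \<in> Tk d k. \<forall>b \<in> Tk d (n - k). tmul a b \<in> Iid d Rm q \<inter> Tk d n}"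

definition yact :: "nat \<Rightarrow> (nat \<Rightarrow> nat \<Rightarrow> nat \<Rightarrow> nat \<Rightarrow> 'a::field) \<Rightarrow> 'a \<Rightarrow> nat
    \<Rightarrow> (nat list \<Rightarrow> 'a) \<Rightarrow> nat list \<Rightarrow> 'a" where
  "yact d Rm q k f = (\<lambda>w. \<Sum>j<k. (-1) ^ j * q ^ (k - 1 - j) * Tprod d Rm j f w)"

end

theory Submission
  imports Defs
begin

text \<open>
  Let I_m be the degree m part of the ideal; it is spanned by the tensors u \<otimes> x \<otimes> v with
  x \<in> Ker(R - q). The key fact is y_m I_m \<subseteq> V \<otimes> I_(m-1). On a generator u \<otimes> x \<otimes> v with
  u of degree i, the terms j = i and j = i + 1 of y_m cancel because T_(i+1) acts on x by q;
  for j < i the operator T_1 \<cdots> T_j only touches u; for j > i + 1 the braid relation gives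
  T_1 T_2 (x \<otimes> e) \<in> V \<otimes> Ker(R - q), so x can be moved one step to the right. In each
  remaining case the left tensor factor has positive degree, which places the term in
  V \<otimes> I_(m-1).

  Now let a \<in> L_k and let b have degree n + 1 - k. Then a \<otimes> b \<in> I_(n+1), and splitting y_(n+1)
  at j = k gives y_(n+1) (a \<otimes> b) = q^(n+1-k) (y_k a) \<otimes> b + (terms T_1 \<cdots> T_k (a \<otimes> z)).
  As the T_i are invertible, z = T_1 \<cdots> T_(n-k) z', so T_1 \<cdots> T_k (a \<otimes> z) = T_1 \<cdots> T_n (a \<otimes> z'),
  and a \<otimes> z' is a sum of terms g \<otimes> e with g \<in> I_n, which T_1 \<cdots> T_n maps into V \<otimes> I_n by
  the braid argument. Hence (y_k a) \<otimes> b \<in> V \<otimes> I_n for every b, so every left coefficient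
  of y_k a lies in L_(k-1).
\<close>

lemma Tk_iff: "f \<in> Tk d m \<longleftrightarrow> (\<forall>w. f w \<noteq> 0 \<longrightarrow> length w = m \<and> set w \<subseteq> {..<d})"
proof
  assume "f \<in> Tk d m"
  thus "\<forall>w. f w \<noteq> 0 \<longrightarrow> length w = m \<and> set w \<subseteq> {..<d}"
    by (auto simp: Tk_def Tall_def)
next
  assume h: "\<forall>w. f w \<noteq> 0 \<longrightarrow> length w = m \<and> set w \<subseteq> {..<d}"
  have "{w. f w \<noteq> 0} \<subseteq> {xs. set xs \<subseteq> {..<d} \<and> length xs = m}" using h by auto
  moreover have "finite {xs. set xs \<subseteq> {..<d} \<and> length xs = m}"
    by (rule finite_lists_length_eq) simp
  ultimately have "finite {w. f w \<noteq> 0}" by (rule finite_subset)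
  thus "f \<in> Tk d m" using h by (auto simp: Tk_def Tall_def)
qed

lemma Tk_length: "f \<in> Tk d m \<Longrightarrow> f w \<noteq> 0 \<Longrightarrow> length w = m"
  and Tk_alphabet: "f \<in> Tk d m \<Longrightarrow> f w \<noteq> 0 \<Longrightarrow> set w \<subseteq> {..<d}"
  and Tk_eq_0_length: "f \<in> Tk d m \<Longrightarrow> length w \<noteq> m \<Longrightarrow> f w = 0"
  and Tk_eq_0_alphabet: "f \<in> Tk d m \<Longrightarrow> \<not> set w \<subseteq> {..<d} \<Longrightarrow> f w = 0"
  by (auto simp: Tk_iff)

lemma Tk_Tall: "f \<in> Tk d m \<Longrightarrow> f \<in> Tall d"
  by (simp add: Tk_def)

lemma Tk_lincomb: "f \<in> Tk d m \<Longrightarrow> g \<in> Tk d m \<Longrightarrow> (\<lambda>w. c * f w + g w) \<in> Tk d m"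
  unfolding Tk_iff by (metis add_0 mult_zero_right)

lemma Tk_zero: "(\<lambda>w. 0) \<in> Tk d m"
  by (auto simp: Tk_iff)

lemma Tk_smult: "f \<in> Tk d m \<Longrightarrow> (\<lambda>w. c * f w) \<in> Tk d m"
  by (auto simp: Tk_iff)

lemma Tk_sum:
  "finite A \<Longrightarrow> (\<And>i. i \<in> A \<Longrightarrow> f i \<in> Tk d m) \<Longrightarrow> (\<lambda>w. \<Sum>i\<in>A. f i w) \<in> Tk d m"
proof (induction A rule: finite_induct)
  case empty thus ?case by (simp add: Tk_zero)
next
  case (insert x F)
  have "(\<lambda>w. 1 * f x w + (\<Sum>i\<in>F. f i w)) \<in> Tk d m"
    by (rule Tk_lincomb) (use insert in auto)
  thus ?case using insert by simp
qed

lemma lin_span_lincomb: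
  "a \<in> lin_span S \<Longrightarrow> b \<in> lin_span S \<Longrightarrow> (\<lambda>w. c * a w + b w) \<in> lin_span S"
proof (induction a rule: lin_span.induct)
  case zero thus ?case by simp
next
  case (step x a c')
  have "(\<lambda>w. c * a w + b w) \<in> lin_span S" using step by simp
  hence "(\<lambda>w. (c * c') * x w + (c * a w + b w)) \<in> lin_span S"
    using lin_span.step[OF step(1)] by blast
  thus ?case by (simp add: algebra_simps)
qed

lemma lin_span_base: "x \<in> S \<Longrightarrow> x \<in> lin_span S"
  using lin_span.step[OF _ lin_span.zero, of x S 1] by simp

lemma lin_span_smult: "a \<in> lin_span S \<Longrightarrow> (\<lambda>w. c * a w) \<in> lin_span S"
  using lin_span_lincomb[OF _ lin_span.zero, of a S c] by simp

lemma lin_span_add: "a \<in> lin_span S \<Longrightarrow> b \<in> lin_span S \<Longrightarrow> (\<lambda>w. a w + b w) \<in> lin_span S"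
  using lin_span_lincomb[of a S b 1] by simp

lemma lin_span_diff: "a \<in> lin_span S \<Longrightarrow> b \<in> lin_span S \<Longrightarrow> (\<lambda>w. a w - b w) \<in> lin_span S"
  using lin_span_lincomb[of b S a "-1"] by simp

lemma lin_span_sum:
  "finite A \<Longrightarrow> (\<And>i. i \<in> A \<Longrightarrow> f i \<in> lin_span S) \<Longrightarrow> (\<lambda>w. \<Sum>i\<in>A. f i w) \<in> lin_span S"
proof (induction A rule: finite_induct)
  case empty thus ?case by (simp add: lin_span.zero)
next
  case (insert x F)
  thus ?case using lin_span_add[of "f x" S "\<lambda>w. \<Sum>i\<in>F. f i w"] by simp
qed

lemma lin_span_subset_span:
  assumes "\<And>x. x \<in> S \<Longrightarrow> x \<in> lin_span T" and "y \<in> lin_span S"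
  shows "y \<in> lin_span T"
  using assms(2) by induction (auto intro: lin_span.zero lin_span_lincomb assms(1))

lemma lin_span_Tk:
  assumes "S \<subseteq> Tk d m" and "y \<in> lin_span S"
  shows "y \<in> Tk d m"
  using assms(2) by induction (use assms(1) in \<open>auto intro: Tk_zero Tk_lincomb\<close>)

definition lin_op :: "((nat list \<Rightarrow> 'a::field) \<Rightarrow> (nat list \<Rightarrow> 'a)) \<Rightarrow> bool" where
  "lin_op F \<longleftrightarrow> (\<forall>c f g. F (\<lambda>w. c * f w + g w) = (\<lambda>w. c * F f w + F g w))"

lemma lin_opD: "lin_op F \<Longrightarrow> F (\<lambda>w. c * f w + g w) = (\<lambda>w. c * F f w + F g w)"
  by (simp add: lin_op_def)

lemma lin_op_zero: "lin_op F \<Longrightarrow> F (\<lambda>w. 0) = (\<lambda>w. 0)"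
  using lin_opD[of F "-1" "\<lambda>w. 0" "\<lambda>w. 0"] by simp

lemma lin_op_smult: "lin_op F \<Longrightarrow> F (\<lambda>w. c * f w) = (\<lambda>w. c * F f w)"
  using lin_opD[of F c f "\<lambda>w. 0"] lin_op_zero[of F] by simp

lemma lin_op_add: "lin_op F \<Longrightarrow> F (\<lambda>w. f w + g w) = (\<lambda>w. F f w + F g w)"
  using lin_opD[of F 1 f g] by simp

lemma lin_op_diff: "lin_op F \<Longrightarrow> F (\<lambda>w. f w - g w) = (\<lambda>w. F f w - F g w)"
  using lin_opD[of F "-1" g f] by (simp add: algebra_simps)

lemma lin_op_sum:
  assumes "lin_op F" and "finite A"
  shows "F (\<lambda>w. \<Sum>i\<in>A. f i w) = (\<lambda>w. \<Sum>i\<in>A. F (f i) w)"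
  using assms(2)
proof (induction A rule: finite_induct)
  case empty thus ?case by (simp add: lin_op_zero assms(1))
next
  case (insert x A)
  thus ?case using lin_op_add[OF assms(1), of "f x" "\<lambda>w. \<Sum>i\<in>A. f i w"] by simp
qed

lemma lin_op_lin_span:
  assumes "lin_op F" and "\<And>x. x \<in> S \<Longrightarrow> F x \<in> lin_span T" and "y \<in> lin_span S"
  shows "F y \<in> lin_span T"
  using assms(3)
  by induction (simp_all add: lin_op_zero lin_span.zero lin_opD lin_span_lincomb assms(1,2))

lemma lin_op_comp: "lin_op F \<Longrightarrow> lin_op G \<Longrightarrow> lin_op (\<lambda>f. F (G f))"
  by (simp add: lin_op_def)

section \<open>Multiplication of the tensor algebra\<close>

lemma tmul_Tk_left:
  assumes f: "f \<in> Tk d k"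
  shows "tmul f g w = (if k \<le> length w then f (take k w) * g (drop k w) else 0)"
proof -
  have z: "f (take j w) * g (drop j w) = 0" if "j \<le> length w" "j \<noteq> k" for j
    using that Tk_eq_0_length[OF f, of "take j w"] by simp
  show ?thesis
  proof (cases "k \<le> length w")
    case True
    have "(\<Sum>j\<in>{..length w} - {k}. f (take j w) * g (drop j w)) = 0"
      by (rule sum.neutral) (use z in auto)
    thus ?thesis unfolding tmul_def using True by (simp add: sum.remove[of _ k])
  next
    case False
    thus ?thesis unfolding tmul_def using z by (simp add: sum.neutral)
  qed
qed

lemma tmul_Tk_right:
  assumes g: "g \<in> Tk d l"
  shows "tmul f g w
    = (if l \<le> length w then f (take (length w - l) w) * g (drop (length w - l) w) else 0)"
proof -
  have z: "f (take j w) * g (drop j w) = 0" if "j \<le> length w" "j \<noteq> length w - l \<or> \<not> l \<le> length w" for j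
  proof -
    have "length (drop j w) \<noteq> l" using that by (simp, arith)
    thus ?thesis using Tk_eq_0_length[OF g, of "drop j w"] by simp
  qed
  show ?thesis
  proof (cases "l \<le> length w")
    case True
    have "(\<Sum>j\<in>{..length w} - {length w - l}. f (take j w) * g (drop j w)) = 0"
      by (rule sum.neutral) (use z in auto)
    thus ?thesis unfolding tmul_def using True by (simp add: sum.remove[of _ "length w - l"])
  next
    case False
    thus ?thesis unfolding tmul_def using z by (simp add: sum.neutral)
  qed
qed

lemma tmul_Tk:
  assumes f: "f \<in> Tk d k" and g: "g \<in> Tk d l"
  shows "tmul f g \<in> Tk d (k + l)"
  unfolding Tk_iff
proof (intro allI impI)
  fix w assume "tmul f g w \<noteq> 0"
  hence h: "k \<le> length w" "f (take k w) \<noteq> 0" "g (drop k w) \<noteq> 0"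
    by (auto simp: tmul_Tk_left[OF f] split: if_splits)
  show "length w = k + l \<and> set w \<subseteq> {..<d}"
    using Tk_length[OF f h(2)] Tk_length[OF g h(3)] Tk_alphabet[OF f h(2)] Tk_alphabet[OF g h(3)]
    by (metis append_take_drop_id le_sup_iff length_append set_append)
qed

lemma tmul_assoc:
  assumes f: "f \<in> Tk d k" and g: "g \<in> Tk d l"
  shows "tmul (tmul f g) h = tmul f (tmul g h)"
proof
  fix w :: "nat list"
  have fg: "tmul f g \<in> Tk d (k + l)" by (rule tmul_Tk[OF f g])
  have "take k (take (k + l) w) = take k w" "drop k (take (k + l) w) = take l (drop k w)"
    "drop l (drop k w) = drop (k + l) w"
    by (simp_all add: min_def drop_take add.commute)
  thus "tmul (tmul f g) h w = tmul f (tmul g h) w"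
    unfolding tmul_Tk_left[OF fg, of h w] tmul_Tk_left[OF f] tmul_Tk_left[OF g]
    by (auto simp: ac_simps le_diff_conv2)
qed

lemma lin_op_tmul_left: "lin_op (\<lambda>f. tmul f g)"
  and lin_op_tmul_right: "lin_op (\<lambda>g. tmul f g)"
  unfolding lin_op_def tmul_def by (auto simp: sum_distrib_left sum.distrib algebra_simps)

definition basis_vec :: "nat \<Rightarrow> nat list \<Rightarrow> 'a::field" where
  "basis_vec c = (\<lambda>w. if w = [c] then 1 else 0)"

definition lcoeff :: "nat \<Rightarrow> (nat list \<Rightarrow> 'a) \<Rightarrow> nat list \<Rightarrow> 'a" where
  "lcoeff c f = (\<lambda>w. f (c # w))"

definition rcoeff :: "nat \<Rightarrow> (nat list \<Rightarrow> 'a) \<Rightarrow> nat list \<Rightarrow> 'a" where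
  "rcoeff c f = (\<lambda>w. f (w @ [c]))"

lemma basis_vec_Tk: "c < d \<Longrightarrow> (basis_vec c :: nat list \<Rightarrow> 'a::field) \<in> Tk d 1"
  by (auto simp: Tk_iff basis_vec_def)

lemma tmul_basis_vec_left:
  "tmul (basis_vec c) g w = (case w of [] \<Rightarrow> 0 | x # w' \<Rightarrow> if x = c then g w' else 0)"
  using tmul_Tk_left[OF basis_vec_Tk[of c "Suc c"], of g w] by (cases w) (auto simp: basis_vec_def)

lemma tmul_basis_vec_right:
  "tmul g (basis_vec c) w = (if w \<noteq> [] \<and> last w = c then g (butlast w) else 0)"
  using tmul_Tk_right[OF basis_vec_Tk[of c "Suc c"], of g w]
  by (cases w rule: rev_cases) (auto simp: basis_vec_def butlast_conv_take)

lemma lcoeff_tmul_basis_vec: "lcoeff c (tmul (basis_vec e) g) = (if c = e then g else (\<lambda>w. 0))"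
  by (auto simp: lcoeff_def tmul_basis_vec_left)

lemma lcoeff_Tk: "f \<in> Tk d (Suc p) \<Longrightarrow> lcoeff c f \<in> Tk d p"
  unfolding Tk_iff lcoeff_def by (metis length_Cons nat.inject set_subset_Cons subset_trans)

lemma rcoeff_Tk: "f \<in> Tk d (Suc p) \<Longrightarrow> rcoeff c f \<in> Tk d p"
  unfolding Tk_iff rcoeff_def by (metis Suc_inject length_append_singleton le_sup_iff set_append)

lemma lin_op_lcoeff: "lin_op (lcoeff c)"
  by (auto simp: lin_op_def lcoeff_def)

lemma lcoeff_tmul:
  assumes y: "y \<in> Tk d (Suc p)"
  shows "lcoeff c (tmul y b) = tmul (lcoeff c y) b"
proof
  fix w
  show "lcoeff c (tmul y b) w = tmul (lcoeff c y) b w"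
    unfolding lcoeff_def tmul_Tk_left[OF y] using tmul_Tk_left[OF lcoeff_Tk[OF y], of c b w]
    by (simp add: lcoeff_def)
qed

lemma Tk_Suc_decompose_left:
  assumes f: "f \<in> Tk d (Suc p)"
  shows "f = (\<lambda>w. \<Sum>c<d. tmul (basis_vec c) (lcoeff c f) w)"
proof
  fix w
  show "f w = (\<Sum>c<d. tmul (basis_vec c) (lcoeff c f) w)"
  proof (cases w)
    case Nil thus ?thesis using Tk_eq_0_length[OF f, of w] by (simp add: tmul_basis_vec_left)
  next
    case (Cons x w')
    thus ?thesis using Tk_eq_0_alphabet[OF f, of w]
      by (cases "x < d") (auto simp: tmul_basis_vec_left lcoeff_def)
  qed
qed

lemma Tk_Suc_decompose_right:
  assumes f: "f \<in> Tk d (Suc p)"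
  shows "f = (\<lambda>w. \<Sum>c<d. tmul (rcoeff c f) (basis_vec c) w)"
proof
  fix w
  show "f w = (\<Sum>c<d. tmul (rcoeff c f) (basis_vec c) w)"
  proof (cases w rule: rev_cases)
    case Nil thus ?thesis using Tk_eq_0_length[OF f, of w] by (simp add: tmul_basis_vec_right)
  next
    case (snoc w' x)
    thus ?thesis using Tk_eq_0_alphabet[OF f, of w]
      by (cases "x < d") (auto simp: tmul_basis_vec_right rcoeff_def)
  qed
qed

lemma tmul_decompose_right:
  assumes a: "a \<in> Tk d k" and z: "z \<in> Tk d (Suc p)"
  shows "tmul a z = (\<lambda>w. \<Sum>e<d. tmul (tmul a (rcoeff e z)) (basis_vec e) w)"
proof -
  have "tmul a z = (\<lambda>w. \<Sum>e<d. tmul a (tmul (rcoeff e z) (basis_vec e)) w)"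
    by (subst Tk_Suc_decompose_right[OF z]) (rule lin_op_sum[OF lin_op_tmul_right], simp)
  thus ?thesis using tmul_assoc[OF a rcoeff_Tk[OF z]] by simp
qed

section \<open>The operators T_i\<close>

lemma lin_op_Tact: "lin_op (Tact d Rm i)"
  unfolding lin_op_def Tact_def by (auto simp: sum_distrib_left sum.distrib algebra_simps)

lemma Tact_Tk:
  assumes f: "f \<in> Tk d m"
  shows "Tact d Rm i f \<in> Tk d m"
  unfolding Tk_iff
proof (intro allI impI)
  fix w assume h: "Tact d Rm i f w \<noteq> 0"
  hence c: "set w \<subseteq> {..<d}" "1 \<le> i" "i < length w" by (auto simp: Tact_def split: if_splits)
  from h c obtain a b where "f (w[i - 1 := a, i := b]) \<noteq> 0"
    by (auto simp: Tact_def elim!: sum.not_neutral_contains_not_neutral)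
  hence "length (w[i - 1 := a, i := b]) = m" by (rule Tk_length[OF f])
  thus "length w = m \<and> set w \<subseteq> {..<d}" using c by simp
qed

lemma Tact_tmul_left:
  assumes f: "f \<in> Tk d k" and i: "1 \<le> i" "i < k" and g: "g \<in> Tk d l"
  shows "Tact d Rm i (tmul f g) = tmul (Tact d Rm i f) g"
proof
  fix w
  have tf: "Tact d Rm i f \<in> Tk d k" by (rule Tact_Tk[OF f])
  show "Tact d Rm i (tmul f g) w = tmul (Tact d Rm i f) g w"
  proof (cases "k \<le> length w")
    case False
    thus ?thesis unfolding tmul_Tk_left[OF tf] by (simp add: Tact_def tmul_Tk_left[OF f])
  next
    case kw: True
    have tk: "take k (w[i - Suc 0 := a, i := b]) = (take k w)[i - Suc 0 := a, i := b]" for a b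
      by (simp add: take_update_swap)
    have dk: "drop k (w[i - 1 := a, i := b]) = drop k w" for a b
      using i by (simp add: drop_update_cancel)
    have n1: "take k w ! (i - 1) = w ! (i - 1)" "take k w ! i = w ! i" using i kw by auto
    show ?thesis
    proof (cases "set w \<subseteq> {..<d}")
      case True
      hence "set (take k w) \<subseteq> {..<d}" by (meson order_trans set_take_subset)
      thus ?thesis
        unfolding tmul_Tk_left[OF tf] unfolding Tact_def tmul_Tk_left[OF f]
        using True kw i by (simp add: tk dk n1 sum_distrib_left algebra_simps)
    next
      case False
      have "set (take k w) \<subseteq> {..<d} \<Longrightarrow> \<not> set (drop k w) \<subseteq> {..<d}"
        using False by (metis append_take_drop_id le_sup_iff set_append)
      hence "Tact d Rm i f (take k w) * g (drop k w) = 0"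
        using Tk_eq_0_alphabet[OF g] by (auto simp: Tact_def)
      thus ?thesis using False kw unfolding tmul_Tk_left[OF tf] by (simp add: Tact_def)
    qed
  qed
qed

lemma Tact_tmul_right:
  assumes f: "f \<in> Tk d k" and i: "k < i"
  shows "Tact d Rm i (tmul f g) = tmul f (Tact d Rm (i - k) g)"
proof
  fix w
  show "Tact d Rm i (tmul f g) w = tmul f (Tact d Rm (i - k) g) w"
  proof (cases "k \<le> length w")
    case False
    thus ?thesis by (simp add: Tact_def tmul_Tk_left[OF f])
  next
    case kw: True
    have tk: "take k (w[i - 1 := a, i := b]) = take k w" for a b
      using i by (simp add: take_update_cancel)
    have dk: "drop k (w[i - Suc 0 := a, i := b]) = (drop k w)[i - Suc k := a, i - k := b]" for a b
      using i by (simp add: drop_update_swap)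
    have c1: "(Suc 0 \<le> i - k \<and> i - k < length w - k) = (i < length w)" using i kw by auto
    have e: "i - k - 1 = i - Suc k" by simp
    have n1: "drop k w ! (i - Suc k) = w ! (i - 1)" "drop k w ! (i - k) = w ! i" using i kw
      by (auto simp: nth_drop)
    show ?thesis
    proof (cases "set w \<subseteq> {..<d}")
      case True
      hence "set (drop k w) \<subseteq> {..<d}" by (meson order_trans set_drop_subset)
      thus ?thesis
        unfolding Tact_def tmul_Tk_left[OF f]
        using True kw i by (simp add: tk dk c1 n1 sum_distrib_left algebra_simps e)
    next
      case False
      have "set (drop k w) \<subseteq> {..<d} \<Longrightarrow> \<not> set (take k w) \<subseteq> {..<d}"
        using False by (metis append_take_drop_id le_sup_iff set_append)
      hence "f (take k w) * Tact d Rm (i - k) g (drop k w) = 0"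
        using Tk_eq_0_alphabet[OF f] by (auto simp: Tact_def)
      thus ?thesis using False kw by (simp add: Tact_def tmul_Tk_left[OF f])
    qed
  qed
qed

lemma lcoeff_Tact: "c < d \<Longrightarrow> 1 \<le> i \<Longrightarrow> lcoeff c (Tact d Rm (Suc i) h) = Tact d Rm i (lcoeff c h)"
  by (cases i) (auto simp: lcoeff_def Tact_def)

fun Tchain :: "nat \<Rightarrow> (nat \<Rightarrow> nat \<Rightarrow> nat \<Rightarrow> nat \<Rightarrow> 'a::field) \<Rightarrow> nat \<Rightarrow> nat
    \<Rightarrow> (nat list \<Rightarrow> 'a) \<Rightarrow> nat list \<Rightarrow> 'a" where
  "Tchain d Rm s 0 f = f"
| "Tchain d Rm s (Suc l) f = Tchain d Rm s l (Tact d Rm (s + l) f)"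

lemma Tprod_eq_Tchain: "Tprod d Rm j f = Tchain d Rm 1 j f"
  by (induction j arbitrary: f) auto

lemma Tchain_add: "Tchain d Rm s (a + b) f = Tchain d Rm s a (Tchain d Rm (s + a) b f)"
  by (induction b arbitrary: f) (auto simp: add.assoc)

lemma Tchain_Tk: "f \<in> Tk d m \<Longrightarrow> Tchain d Rm s l f \<in> Tk d m"
  by (induction l arbitrary: f) (auto simp: Tact_Tk)

lemma lin_op_Tchain: "lin_op (Tchain d Rm s l)"
proof (induction l)
  case 0 thus ?case by (simp add: lin_op_def)
next
  case (Suc l)
  show ?case using lin_op_comp[OF Suc lin_op_Tact] by simp
qed

lemma lin_op_Tprod: "lin_op (Tprod d Rm j)"
  unfolding Tprod_eq_Tchain[abs_def] by (rule lin_op_Tchain)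

lemma Tchain_tmul_left:
  assumes "a \<in> Tk d k" "1 \<le> s" "s + l \<le> k" "z \<in> Tk d m"
  shows "Tchain d Rm s l (tmul a z) = tmul (Tchain d Rm s l a) z"
  using assms
proof (induction l arbitrary: a)
  case 0 thus ?case by simp
next
  case (Suc l)
  have "Tact d Rm (s + l) (tmul a z) = tmul (Tact d Rm (s + l) a) z"
    by (rule Tact_tmul_left) (use Suc.prems in auto)
  thus ?case using Suc Tact_Tk[OF Suc.prems(1)] by simp
qed

lemma Tchain_tmul_right:
  assumes "a \<in> Tk d k" "1 \<le> s"
  shows "Tchain d Rm (s + k) l (tmul a z) = tmul a (Tchain d Rm s l z)"
proof (induction l arbitrary: z)
  case 0 thus ?case by simp
next
  case (Suc l)
  have "Tact d Rm (s + k + l) (tmul a z) = tmul a (Tact d Rm (s + l) z)"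
    using Tact_tmul_right[OF assms(1), of "s + k + l"] assms(2) by simp
  thus ?case using Suc by simp
qed

section \<open>Consequences of the Hecke relations\<close>

lemma hecke_q_nonzero: "is_hecke_symmetry d Rm q \<Longrightarrow> q \<noteq> 0"
  by (simp add: is_hecke_symmetry_def)

lemma hecke_Rop_quadratic:
  assumes H: "is_hecke_symmetry d Rm q" and f: "f \<in> Tk d 2"
  shows "Rop d Rm (Rop d Rm f) = (\<lambda>w. (q - 1) * Rop d Rm f w + q * f w)"
proof -
  have "Rop d Rm (\<lambda>w. Rop d Rm f w - q * f w) w + (Rop d Rm f w - q * f w) = 0" for w
    using H f unfolding is_hecke_symmetry_def Let_def by blast
  moreover have "Rop d Rm (\<lambda>w. Rop d Rm f w - q * f w)
      = (\<lambda>w. Rop d Rm (Rop d Rm f) w - q * Rop d Rm f w)"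
    by (simp add: lin_op_diff[OF lin_op_Tact] lin_op_smult[OF lin_op_Tact])
  ultimately show ?thesis by (auto simp: algebra_simps eq_neg_iff_add_eq_0)
qed

text \<open>The quadratic relation for T_i is reduced to the one for R by restricting a tensor to
  the words that agree with a fixed word w outside the positions i - 1 and i.\<close>

definition localize :: "nat \<Rightarrow> nat list \<Rightarrow> nat \<Rightarrow> (nat list \<Rightarrow> 'a::field) \<Rightarrow> nat list \<Rightarrow> 'a" where
  "localize d w i f = (\<lambda>u. if length u = 2 \<and> set u \<subseteq> {..<d} then f (w[i - 1 := u ! 0, i := u ! 1]) else 0)"

lemma localize_Tk: "localize d w i f \<in> Tk d 2"
  by (simp add: Tk_iff localize_def)

lemma localize_self:
  assumes "set w \<subseteq> {..<d}" "1 \<le> i" "i < length w"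
  shows "localize d w i f [w ! (i - 1), w ! i] = f w"
proof -
  have "w ! (i - 1) \<in> set w" "w ! i \<in> set w" using assms(3) by simp_all
  hence "w ! (i - 1) < d" "w ! i < d" using assms(1) by auto
  thus ?thesis using assms by (simp add: localize_def)
qed

lemma localize_Tact:
  assumes w: "set w \<subseteq> {..<d}" and i: "1 \<le> i" "i < length w"
  shows "localize d w i (Tact d Rm i f) = Rop d Rm (localize d w i f)"
proof
  fix u :: "nat list"
  show "localize d w i (Tact d Rm i f) u = Rop d Rm (localize d w i f) u"
  proof (cases "length u = 2 \<and> set u \<subseteq> {..<d}")
    case True
    then obtain a b where u: "u = [a, b]" "a < d" "b < d"
      by (auto simp: numeral_2_eq_2 length_Suc_conv)
    have "set (w[i - 1 := a, i := b]) \<subseteq> {..<d}"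
      using w u by (meson order_trans set_update_subset_insert insert_subset lessThan_iff)
    moreover have "w[i - 1 := a, i := b, i - 1 := a', i := b'] = w[i - 1 := a', i := b']" for a' b'
      using i by (metis diff_less less_one list_update_overwrite list_update_swap nat_neq_iff)
    ultimately show ?thesis using u i by (simp add: localize_def Tact_def nth_list_update)
  next
    case False
    have "length u \<noteq> 2 \<Longrightarrow> localize d w i f (u[0 := a, Suc 0 := b]) = 0" for a b
      by (simp add: localize_def)
    thus ?thesis using False by (auto simp: localize_def Tact_def)
  qed
qed

lemma Tact_quadratic:
  assumes H: "is_hecke_symmetry d Rm q" and f: "f \<in> Tk d m" and i: "1 \<le> i" "i < m"
  shows "Tact d Rm i (Tact d Rm i f) = (\<lambda>w. (q - 1) * Tact d Rm i f w + q * f w)"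
proof
  fix w
  show "Tact d Rm i (Tact d Rm i f) w = (q - 1) * Tact d Rm i f w + q * f w"
  proof (cases "set w \<subseteq> {..<d} \<and> i < length w")
    case True
    hence loc: "localize d w i (Tact d Rm i g) = Rop d Rm (localize d w i g)" for g
      using localize_Tact i(1) by blast
    have "Tact d Rm i (Tact d Rm i f) w
        = localize d w i (Tact d Rm i (Tact d Rm i f)) [w ! (i - 1), w ! i]"
      using localize_self True i by metis
    also have "\<dots> = Rop d Rm (Rop d Rm (localize d w i f)) [w ! (i - 1), w ! i]"
      by (simp only: loc)
    also have "\<dots> = (q - 1) * Rop d Rm (localize d w i f) [w ! (i - 1), w ! i]
        + q * localize d w i f [w ! (i - 1), w ! i]"
      by (simp only: hecke_Rop_quadratic[OF H localize_Tk])
    also have "\<dots> = (q - 1) * Tact d Rm i f w + q * f w"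
      using True i by (simp only: loc[symmetric] localize_self)
    finally show ?thesis .
  next
    case False
    hence "f w = 0"
      using i Tk_eq_0_length[OF f, of w] Tk_eq_0_alphabet[OF f, of w] by auto
    moreover have "Tact d Rm i g w = 0" for g using False by (auto simp: Tact_def)
    ultimately show ?thesis by simp
  qed
qed

lemma Tact_surj:
  assumes H: "is_hecke_symmetry d Rm q" and f: "f \<in> Tk d m" and i: "1 \<le> i" "i < m"
  shows "\<exists>g \<in> Tk d m. Tact d Rm i g = f"
proof
  have q: "q \<noteq> 0" by (rule hecke_q_nonzero[OF H])
  define g where "g = (\<lambda>w. (1 / q) * Tact d Rm i f w + (- (q - 1) / q) * f w)"
  show "g \<in> Tk d m" unfolding g_def by (intro Tk_lincomb Tk_smult Tact_Tk f)
  have "Tact d Rm i g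
      = (\<lambda>w. (1 / q) * Tact d Rm i (Tact d Rm i f) w + (- (q - 1) / q) * Tact d Rm i f w)"
    unfolding g_def by (simp only: lin_opD[OF lin_op_Tact] lin_op_smult[OF lin_op_Tact])
  thus "Tact d Rm i g = f" using q by (auto simp: Tact_quadratic[OF H f i] field_simps)
qed

lemma Tchain_surj:
  assumes H: "is_hecke_symmetry d Rm q" and z: "z \<in> Tk d p" and j: "j < p"
  shows "\<exists>z' \<in> Tk d p. Tchain d Rm 1 j z' = z"
  using j
proof (induction j)
  case 0 thus ?case using z by auto
next
  case (Suc j)
  then obtain w where w: "w \<in> Tk d p" "Tchain d Rm 1 j w = z" by auto
  obtain g where "g \<in> Tk d p" "Tact d Rm (Suc j) g = w"
    using Tact_surj[OF H w(1)] Suc.prems by auto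
  thus ?case using w by auto
qed

lemma Kq_Tk: "x \<in> Kq d Rm q \<Longrightarrow> x \<in> Tk d 2"
  by (simp add: Kq_def)

lemma Kq_Rop: "x \<in> Kq d Rm q \<Longrightarrow> Rop d Rm x = (\<lambda>w. q * x w)"
  by (auto simp: Kq_def)

lemma Tact_tmul_Kq:
  assumes x: "x \<in> Kq d Rm q" and v: "v \<in> Tk d l"
  shows "Rop d Rm (tmul x v) = (\<lambda>w. q * tmul x v w)"
proof -
  have "Rop d Rm (tmul x v) = tmul (Rop d Rm x) v"
    by (rule Tact_tmul_left[OF Kq_Tk[OF x] _ _ v]) simp_all
  also have "\<dots> = tmul (\<lambda>w. q * x w) v" by (simp only: Kq_Rop[OF x])
  also have "\<dots> = (\<lambda>w. q * tmul x v w)" by (rule lin_op_smult[OF lin_op_tmul_left])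
  finally show ?thesis .
qed

text \<open>By the braid relation, T_2 acts by q on T_1 T_2 (x \<otimes> e) because T_1 does on x \<otimes> e.\<close>

lemma braid_lcoeff_Kq:
  assumes H: "is_hecke_symmetry d Rm q" and x: "x \<in> Kq d Rm q" and e: "e < d" and c: "c < d"
  shows "lcoeff c (Tchain d Rm 1 2 (tmul x (basis_vec e))) \<in> Kq d Rm q"
proof -
  define h where "h = Tact d Rm 1 (Tact d Rm 2 (tmul x (basis_vec e)))"
  have f3: "tmul x (basis_vec e) \<in> Tk d 3"
    using tmul_Tk[OF Kq_Tk[OF x] basis_vec_Tk[OF e]] by simp
  have hT: "h \<in> Tk d (Suc 2)" unfolding h_def by (simp add: Tact_Tk f3)
  have "Tact d Rm 2 h = Tact d Rm 1 (Tact d Rm 2 (Tact d Rm 1 (tmul x (basis_vec e))))"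
    using H f3 unfolding is_hecke_symmetry_def h_def by metis
  also have "\<dots> = (\<lambda>w. q * h w)"
    unfolding h_def Tact_tmul_Kq[OF x basis_vec_Tk[OF e]]
    by (simp add: lin_op_smult[OF lin_op_Tact])
  finally have "Rop d Rm (lcoeff c h) = (\<lambda>w. q * lcoeff c h w)"
    using lcoeff_Tact[OF c, of 1 Rm h] by (simp add: numeral_2_eq_2 lcoeff_def)
  moreover have "lcoeff c h \<in> Tk d 2" by (rule lcoeff_Tk[OF hT])
  ultimately show ?thesis by (simp add: Kq_def h_def numeral_2_eq_2)
qed

section \<open>Homogeneous components of the ideal\<close>

text \<open>Ideg d Rm q m is I_m, the degree m part of the ideal, and VIdeg d Rm q m is
  V \<otimes> I_(m-1) inside T_m.\<close>

definition Igens :: "nat \<Rightarrow> (nat \<Rightarrow> nat \<Rightarrow> nat \<Rightarrow> nat \<Rightarrow> 'a::field) \<Rightarrow> 'a \<Rightarrow> nat \<Rightarrow> (nat list \<Rightarrow> 'a) set"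
  where "Igens d Rm q m = {tmul u (tmul x v) | u x v i l.
    u \<in> Tk d i \<and> x \<in> Kq d Rm q \<and> v \<in> Tk d l \<and> m = i + 2 + l}"

definition Ideg :: "nat \<Rightarrow> (nat \<Rightarrow> nat \<Rightarrow> nat \<Rightarrow> nat \<Rightarrow> 'a::field) \<Rightarrow> 'a \<Rightarrow> nat \<Rightarrow> (nat list \<Rightarrow> 'a) set"
  where "Ideg d Rm q m = lin_span (Igens d Rm q m)"

definition VIdeg :: "nat \<Rightarrow> (nat \<Rightarrow> nat \<Rightarrow> nat \<Rightarrow> nat \<Rightarrow> 'a::field) \<Rightarrow> 'a \<Rightarrow> nat \<Rightarrow> (nat list \<Rightarrow> 'a) set"
  where "VIdeg d Rm q m = lin_span {tmul (basis_vec c) g | c g. c < d \<and> g \<in> Ideg d Rm q (m - 1)}"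

lemma Igens_in_Ideg:
  "u \<in> Tk d i \<Longrightarrow> x \<in> Kq d Rm q \<Longrightarrow> v \<in> Tk d l \<Longrightarrow> m = i + 2 + l
    \<Longrightarrow> tmul u (tmul x v) \<in> Ideg d Rm q m"
  unfolding Ideg_def Igens_def by (rule lin_span_base) blast

lemma lin_op_Ideg:
  assumes "lin_op F" and "g \<in> Ideg d Rm q m"
    and "\<And>u x v i l. u \<in> Tk d i \<Longrightarrow> x \<in> Kq d Rm q \<Longrightarrow> v \<in> Tk d l \<Longrightarrow> m = i + 2 + l
      \<Longrightarrow> F (tmul u (tmul x v)) \<in> lin_span S"
  shows "F g \<in> lin_span S"
  using assms(2) unfolding Ideg_def
  by (rule lin_op_lin_span[OF assms(1), rotated]) (auto simp: Igens_def intro: assms(3))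

lemma VIdeg_smult: "g \<in> VIdeg d Rm q m \<Longrightarrow> (\<lambda>w. c * g w) \<in> VIdeg d Rm q m"
  unfolding VIdeg_def by (fact lin_span_smult)

lemma Ideg_sum:
  "finite A \<Longrightarrow> (\<And>i. i \<in> A \<Longrightarrow> f i \<in> Ideg d Rm q m) \<Longrightarrow> (\<lambda>w. \<Sum>i\<in>A. f i w) \<in> Ideg d Rm q m"
  and VIdeg_sum:
  "finite A \<Longrightarrow> (\<And>i. i \<in> A \<Longrightarrow> f i \<in> VIdeg d Rm q m) \<Longrightarrow> (\<lambda>w. \<Sum>i\<in>A. f i w) \<in> VIdeg d Rm q m"
  unfolding Ideg_def VIdeg_def by (fact lin_span_sum)+

lemma Igens_Tk: "Igens d Rm q m \<subseteq> Tk d m"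
proof
  fix f assume "f \<in> Igens d Rm q m"
  then obtain u x v i l where f: "f = tmul u (tmul x v)" "u \<in> Tk d i" "x \<in> Kq d Rm q"
    "v \<in> Tk d l" "m = i + 2 + l"
    unfolding Igens_def by blast
  show "f \<in> Tk d m"
    using tmul_Tk[OF f(2) tmul_Tk[OF Kq_Tk[OF f(3)] f(4)]] by (simp add: f(1,5) add.assoc)
qed

lemma Ideg_Tk: "f \<in> Ideg d Rm q m \<Longrightarrow> f \<in> Tk d m"
  unfolding Ideg_def using lin_span_Tk[OF Igens_Tk] by blast

lemma Ideg_Iid: "f \<in> Ideg d Rm q m \<Longrightarrow> f \<in> Iid d Rm q"
proof -
  have "g \<in> Iid d Rm q" if "g \<in> Igens d Rm q m" for g
  proof -
    obtain u x v i l where g: "g = tmul u (tmul x v)" "u \<in> Tk d i" "x \<in> Kq d Rm q" "v \<in> Tk d l"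
      using \<open>g \<in> Igens d Rm q m\<close> unfolding Igens_def by blast
    hence "g = tmul (tmul u x) v" using tmul_assoc[OF g(2) Kq_Tk[OF g(3)]] by simp
    thus ?thesis unfolding Iid_def using g Tk_Tall by (intro lin_span_base) blast
  qed
  thus "f \<in> Ideg d Rm q m \<Longrightarrow> f \<in> Iid d Rm q"
    unfolding Ideg_def Iid_def by (rule lin_span_subset_span)
qed

definition hom_part :: "nat \<Rightarrow> (nat list \<Rightarrow> 'a::field) \<Rightarrow> nat list \<Rightarrow> 'a" where
  "hom_part m f = (\<lambda>w. if length w = m then f w else 0)"

lemma lin_op_hom_part: "lin_op (hom_part m)"
  by (auto simp: lin_op_def hom_part_def)

lemma hom_part_Tk: "f \<in> Tall d \<Longrightarrow> hom_part m f \<in> Tk d m"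
  by (auto simp: Tk_iff hom_part_def Tall_def)

lemma hom_part_Tk_id: "f \<in> Tk d m \<Longrightarrow> hom_part m f = f"
  by (auto simp: hom_part_def Tk_eq_0_length)

lemma sum_atMost_shift_2:
  fixes m :: nat
  shows "(\<Sum>j\<le>m. if 2 \<le> j then F (j - 2) else 0) = (\<Sum>i<m - 1. F i :: 'a::comm_monoid_add)"
proof (induction m)
  case (Suc m)
  thus ?case by (cases m) simp_all
qed simp

lemma hom_part_tmul_Kq:
  assumes u: "u \<in> Tall d" and v: "v \<in> Tall d" and x: "x \<in> Kq d Rm q"
  shows "hom_part m (tmul (tmul u x) v)
    = (\<lambda>w. \<Sum>i<m - 1. tmul (hom_part i u) (tmul x (hom_part (m - 2 - i) v)) w)"
proof
  fix w
  have xT: "x \<in> Tk d 2" by (rule Kq_Tk[OF x])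
  have term_Tk: "tmul (hom_part i u) (tmul x (hom_part (m - 2 - i) v)) \<in> Tk d m"
    if "i < m - 1" for i
  proof -
    have "i + (2 + (m - 2 - i)) = m" using that by arith
    thus ?thesis using tmul_Tk[OF hom_part_Tk[OF u] tmul_Tk[OF xT hom_part_Tk[OF v]]] by metis
  qed
  show "hom_part m (tmul (tmul u x) v) w
    = (\<Sum>i<m - 1. tmul (hom_part i u) (tmul x (hom_part (m - 2 - i) v)) w)"
  proof (cases "length w = m")
    case False
    hence "tmul (hom_part i u) (tmul x (hom_part (m - 2 - i) v)) w = 0" if "i < m - 1" for i
      using term_Tk[OF that] Tk_eq_0_length by blast
    thus ?thesis using False by (simp add: hom_part_def)
  next
    case True
    have ss: "\<And>j::nat. 2 \<le> j \<Longrightarrow> Suc (Suc (j - 2)) = j" by arith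
    have "tmul (tmul u x) v w = (\<Sum>j\<le>m. if 2 \<le> j
        then u (take (j - 2) w) * x (take 2 (drop (j - 2) w)) * v (drop (j - 2 + 2) w) else 0)"
      unfolding tmul_def[of "tmul u x" v] using True
      by (intro sum.cong refl) (auto simp: tmul_Tk_right[OF xT] min_def drop_take ss)
    also have "\<dots> = (\<Sum>i<m - 1. u (take i w) * x (take 2 (drop i w)) * v (drop (i + 2) w))"
      by (rule sum_atMost_shift_2)
    also have "\<dots> = (\<Sum>i<m - 1. tmul (hom_part i u) (tmul x (hom_part (m - 2 - i) v)) w)"
    proof (rule sum.cong[OF refl])
      fix i assume "i \<in> {..<m - 1}"
      thus "u (take i w) * x (take 2 (drop i w)) * v (drop (i + 2) w)
          = tmul (hom_part i u) (tmul x (hom_part (m - 2 - i) v)) w"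
        unfolding tmul_Tk_left[OF hom_part_Tk[OF u]] tmul_Tk_left[OF xT] using True
        by (auto simp: hom_part_def add.commute)
    qed
    finally show ?thesis using True by (simp add: hom_part_def)
  qed
qed

lemma Iid_Int_Tk_eq_Ideg: "Iid d Rm q \<inter> Tk d m = Ideg d Rm q m"
proof
  show "Ideg d Rm q m \<subseteq> Iid d Rm q \<inter> Tk d m"
    using Ideg_Iid Ideg_Tk by blast
next
  have "hom_part m g \<in> Ideg d Rm q m" if "g \<in> Iid d Rm q" for g
    using that unfolding Iid_def Ideg_def
  proof (rule lin_op_lin_span[OF lin_op_hom_part, rotated])
    fix y assume "y \<in> {tmul (tmul u x) v | u x v. u \<in> Tall d \<and> x \<in> Kq d Rm q \<and> v \<in> Tall d}"
    then obtain u x v where y: "y = tmul (tmul u x) v" "u \<in> Tall d" "x \<in> Kq d Rm q" "v \<in> Tall d"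
      by blast
    have "tmul (hom_part i u) (tmul x (hom_part (m - 2 - i) v)) \<in> Ideg d Rm q m"
      if "i < m - 1" for i
      using that by (intro Igens_in_Ideg[OF hom_part_Tk[OF y(2)] y(3) hom_part_Tk[OF y(4)]]) auto
    hence "(\<lambda>w. \<Sum>i<m - 1. tmul (hom_part i u) (tmul x (hom_part (m - 2 - i) v)) w)
        \<in> Ideg d Rm q m"
      by (intro Ideg_sum) auto
    thus "hom_part m y \<in> lin_span (Igens d Rm q m)"
      unfolding y(1) hom_part_tmul_Kq[OF y(2,4,3)] Ideg_def .
  qed
  thus "Iid d Rm q \<inter> Tk d m \<subseteq> Ideg d Rm q m"
    using hom_part_Tk_id by fastforce
qed

lemma lcoeff_VIdeg: "g \<in> VIdeg d Rm q m \<Longrightarrow> lcoeff c g \<in> Ideg d Rm q (m - 1)"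
  unfolding VIdeg_def Ideg_def
  by (erule lin_op_lin_span[OF lin_op_lcoeff, rotated])
    (auto simp: lcoeff_tmul_basis_vec lin_span.zero)

lemma Igens_in_VIdeg:
  assumes u: "u \<in> Tk d (Suc p)" and x: "x \<in> Kq d Rm q" and v: "v \<in> Tk d l"
    and m: "m = p + 3 + l"
  shows "tmul u (tmul x v) \<in> VIdeg d Rm q m"
proof -
  have "tmul u (tmul x v) = (\<lambda>w. \<Sum>c<d. tmul (tmul (basis_vec c) (lcoeff c u)) (tmul x v) w)"
    by (subst Tk_Suc_decompose_left[OF u]) (rule lin_op_sum[OF lin_op_tmul_left], simp)
  also have "\<dots> = (\<lambda>w. \<Sum>c<d. tmul (basis_vec c) (tmul (lcoeff c u) (tmul x v)) w)"
    using tmul_assoc[OF basis_vec_Tk lcoeff_Tk[OF u]] by simp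
  also have "\<dots> \<in> VIdeg d Rm q m"
  proof (rule VIdeg_sum)
    fix c assume "c \<in> {..<d}"
    moreover have "tmul (lcoeff c u) (tmul x v) \<in> Ideg d Rm q (m - 1)"
      by (rule Igens_in_Ideg[OF lcoeff_Tk[OF u] x v]) (simp add: m)
    ultimately show "tmul (basis_vec c) (tmul (lcoeff c u) (tmul x v)) \<in> VIdeg d Rm q m"
      unfolding VIdeg_def by (intro lin_span_base) blast
  qed simp
  finally show ?thesis .
qed

lemma Ideg_tmul_basis_vec:
  assumes g: "g \<in> Ideg d Rm q n" and e: "e < d"
  shows "tmul g (basis_vec e) \<in> Ideg d Rm q (Suc n)"
  using lin_op_tmul_left g unfolding Ideg_def[of d Rm q "Suc n"]
proof (rule lin_op_Ideg)
  fix u x v :: "nat list \<Rightarrow> 'a" and i l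
  assume u: "u \<in> Tk d i" and x: "x \<in> Kq d Rm q" and v: "v \<in> Tk d l" and n: "n = i + 2 + l"
  have "tmul (tmul u (tmul x v)) (basis_vec e) = tmul u (tmul x (tmul v (basis_vec e)))"
    using tmul_assoc[OF u tmul_Tk[OF Kq_Tk[OF x] v]] tmul_assoc[OF Kq_Tk[OF x] v] by simp
  also have "\<dots> \<in> Ideg d Rm q (Suc n)"
    by (rule Igens_in_Ideg[OF u x tmul_Tk[OF v basis_vec_Tk[OF e]]]) (simp add: n)
  finally show "tmul (tmul u (tmul x v)) (basis_vec e) \<in> lin_span (Igens d Rm q (Suc n))"
    unfolding Ideg_def .
qed

section \<open>The operators y_m on the ideal\<close>

lemma Tact_Igens_eq_smult:
  assumes u: "u \<in> Tk d i" and x: "x \<in> Kq d Rm q" and v: "v \<in> Tk d l"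
  shows "Tact d Rm (Suc i) (tmul u (tmul x v)) = (\<lambda>w. q * tmul u (tmul x v) w)"
proof -
  have "Tact d Rm (Suc i) (tmul u (tmul x v)) = tmul u (Rop d Rm (tmul x v))"
    using Tact_tmul_right[OF u, of "Suc i" Rm "tmul x v"] by simp
  also have "\<dots> = tmul u (\<lambda>w. q * tmul x v w)" by (simp only: Tact_tmul_Kq[OF x v])
  also have "\<dots> = (\<lambda>w. q * tmul u (tmul x v) w)" by (rule lin_op_smult[OF lin_op_tmul_right])
  finally show ?thesis .
qed

lemma Tchain_Kq_move_right:
  assumes H: "is_hecke_symmetry d Rm q" and x: "x \<in> Kq d Rm q" and v: "v \<in> Tk d (Suc l)"
  shows "Tchain d Rm 1 2 (tmul x v)
    \<in> lin_span {tmul (basis_vec c) (tmul x' s) | c x' s. c < d \<and> x' \<in> Kq d Rm q \<and> s \<in> Tk d l}"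
    (is "_ \<in> lin_span ?W")
proof -
  have xT: "x \<in> Tk d 2" by (rule Kq_Tk[OF x])
  have "tmul x v = (\<lambda>w. \<Sum>e<d. tmul x (tmul (basis_vec e) (lcoeff e v)) w)"
    by (subst Tk_Suc_decompose_left[OF v]) (rule lin_op_sum[OF lin_op_tmul_right], simp)
  also have "\<dots> = (\<lambda>w. \<Sum>e<d. tmul (tmul x (basis_vec e)) (lcoeff e v) w)"
    using tmul_assoc[OF xT basis_vec_Tk] by simp
  finally have "Tchain d Rm 1 2 (tmul x v)
      = (\<lambda>w. \<Sum>e<d. Tchain d Rm 1 2 (tmul (tmul x (basis_vec e)) (lcoeff e v)) w)"
    by (simp add: lin_op_sum[OF lin_op_Tchain])
  also have "\<dots> \<in> lin_span ?W"
  proof (rule lin_span_sum)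
    fix e assume "e \<in> {..<d}"
    hence e: "e < d" by simp
    define h where "h = Tchain d Rm 1 2 (tmul x (basis_vec e))"
    have xe: "tmul x (basis_vec e) \<in> Tk d (Suc 2)"
      using tmul_Tk[OF xT basis_vec_Tk[OF e]] by simp
    have hT: "h \<in> Tk d (Suc 2)" unfolding h_def by (rule Tchain_Tk[OF xe])
    have s: "lcoeff e v \<in> Tk d l" by (rule lcoeff_Tk[OF v])
    have "Tchain d Rm 1 2 (tmul (tmul x (basis_vec e)) (lcoeff e v)) = tmul h (lcoeff e v)"
      unfolding h_def by (rule Tchain_tmul_left[OF xe _ _ s]) simp_all
    also have "\<dots> = (\<lambda>w. \<Sum>c<d. tmul (tmul (basis_vec c) (lcoeff c h)) (lcoeff e v) w)"
      by (subst Tk_Suc_decompose_left[OF hT]) (rule lin_op_sum[OF lin_op_tmul_left], simp)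
    also have "\<dots> = (\<lambda>w. \<Sum>c<d. tmul (basis_vec c) (tmul (lcoeff c h) (lcoeff e v)) w)"
      using tmul_assoc[OF basis_vec_Tk lcoeff_Tk[OF hT]] by simp
    also have "\<dots> \<in> lin_span ?W"
      using braid_lcoeff_Kq[OF H x e] s unfolding h_def
      by (intro lin_span_sum lin_span_base) blast+
    finally show "Tchain d Rm 1 2 (tmul (tmul x (basis_vec e)) (lcoeff e v)) \<in> lin_span ?W" .
  qed simp
  finally show ?thesis .
qed

lemma Tchain_Igens_VIdeg:
  assumes H: "is_hecke_symmetry d Rm q" and u: "u \<in> Tk d i" and x: "x \<in> Kq d Rm q"
    and v: "v \<in> Tk d l" and j: "i + 2 \<le> j" "j < i + 2 + l"
  shows "Tchain d Rm 1 j (tmul u (tmul x v)) \<in> VIdeg d Rm q (i + 2 + l)"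
proof -
  obtain r where r: "j = i + (2 + r)" using j(1) by (metis add.assoc le_iff_add)
  obtain l' where l': "l = Suc l'" using j(2) r by (cases l) auto
  have xT: "x \<in> Tk d 2" by (rule Kq_Tk[OF x])
  define v' where "v' = Tchain d Rm 1 r v"
  have v': "v' \<in> Tk d (Suc l')" unfolding v'_def using Tchain_Tk[OF v] l' by simp
  have "Tchain d Rm (1 + i + 2) r (tmul u (tmul x v)) = tmul u (tmul x v')"
    using Tchain_tmul_right[OF u, of 3 Rm r] Tchain_tmul_right[OF xT, of 1 Rm r v]
    by (simp add: v'_def add.commute numeral_3_eq_3)
  moreover have "Tchain d Rm (1 + i) 2 (tmul u (tmul x v')) = tmul u (Tchain d Rm 1 2 (tmul x v'))"
    using Tchain_tmul_right[OF u, of 1 Rm 2] by (simp add: add.commute)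
  ultimately have eq: "Tchain d Rm 1 j (tmul u (tmul x v))
      = Tchain d Rm 1 i (tmul u (Tchain d Rm 1 2 (tmul x v')))"
    unfolding r Tchain_add[of d Rm 1 i] Tchain_add[of d Rm "1 + i" 2] by simp
  show ?thesis unfolding eq VIdeg_def
  proof (rule lin_op_lin_span[OF lin_op_comp[OF lin_op_Tchain lin_op_tmul_right]
        _ Tchain_Kq_move_right[OF H x v']])
    fix y assume "y \<in> {tmul (basis_vec c) (tmul x' s) | c x' s.
      c < d \<and> x' \<in> Kq d Rm q \<and> s \<in> Tk d l'}"
    then obtain c x' s where y: "y = tmul (basis_vec c) (tmul x' s)" "c < d" "x' \<in> Kq d Rm q"
      "s \<in> Tk d l'" by blast
    have u': "tmul u (basis_vec c) \<in> Tk d (Suc i)" using tmul_Tk[OF u basis_vec_Tk[OF y(2)]] by simp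
    have "Tchain d Rm 1 i (tmul u y) = Tchain d Rm 1 i (tmul (tmul u (basis_vec c)) (tmul x' s))"
      using tmul_assoc[OF u basis_vec_Tk[OF y(2)]] by (simp add: y(1))
    also have "\<dots> = tmul (Tchain d Rm 1 i (tmul u (basis_vec c))) (tmul x' s)"
      by (rule Tchain_tmul_left[OF u' _ _ tmul_Tk[OF Kq_Tk[OF y(3)] y(4)]]) simp_all
    also have "\<dots> \<in> VIdeg d Rm q (i + 2 + l)"
      by (rule Igens_in_VIdeg[OF Tchain_Tk[OF u'] y(3,4)]) (simp add: l')
    finally show "Tchain d Rm 1 i (tmul u y)
        \<in> lin_span {tmul (basis_vec c) g | c g. c < d \<and> g \<in> Ideg d Rm q (i + 2 + l - 1)}"
      unfolding VIdeg_def .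
  qed
qed

lemma Tprod_Igens_VIdeg:
  assumes H: "is_hecke_symmetry d Rm q" and u: "u \<in> Tk d i" and x: "x \<in> Kq d Rm q"
    and v: "v \<in> Tk d l" and j: "j < i + 2 + l" "j \<noteq> i" "j \<noteq> Suc i"
  shows "Tprod d Rm j (tmul u (tmul x v)) \<in> VIdeg d Rm q (i + 2 + l)"
proof (cases "j < i")
  case True
  then obtain p where p: "i = Suc p" by (cases i) auto
  have "Tprod d Rm j (tmul u (tmul x v)) = tmul (Tchain d Rm 1 j u) (tmul x v)"
    unfolding Tprod_eq_Tchain using True
    by (intro Tchain_tmul_left[OF u _ _ tmul_Tk[OF Kq_Tk[OF x] v]]) simp_all
  also have "\<dots> \<in> VIdeg d Rm q (i + 2 + l)"
    using u by (intro Igens_in_VIdeg[OF _ x v]) (simp_all add: p Tchain_Tk)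
  finally show ?thesis .
next
  case False
  thus ?thesis unfolding Tprod_eq_Tchain using j by (intro Tchain_Igens_VIdeg[OF H u x v]) auto
qed

text \<open>The terms j = i and j = i + 1 of y_m cancel on u \<otimes> x \<otimes> v, since T_(i+1) acts on it by q.\<close>

lemma yact_Igens_VIdeg:
  assumes H: "is_hecke_symmetry d Rm q" and u: "u \<in> Tk d i" and x: "x \<in> Kq d Rm q"
    and v: "v \<in> Tk d l" and m: "m = i + 2 + l"
  shows "yact d Rm q m (tmul u (tmul x v)) \<in> VIdeg d Rm q m"
proof -
  define y where "y = tmul u (tmul x v)"
  define t where "t j = (\<lambda>w. (-1) ^ j * q ^ (m - 1 - j) * Tprod d Rm j y w)" for j
  have "Tprod d Rm (Suc i) y = Tprod d Rm i (\<lambda>w. q * y w)"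
    using Tact_Igens_eq_smult[OF u x v] by (simp add: y_def)
  hence "Tprod d Rm (Suc i) y w = q * Tprod d Rm i y w" for w
    by (simp add: lin_op_smult[OF lin_op_Tprod])
  moreover have "q ^ (m - 1 - i) = q ^ (m - 1 - Suc i) * q"
    using m by (simp add: power_Suc2[symmetric] Suc_diff_Suc)
  ultimately have cancel: "t i w + t (Suc i) w = 0" for w
    by (simp add: t_def algebra_simps)
  have i1: "i \<in> {..<m}" and i2: "Suc i \<in> {..<m} - {i}" using m by auto
  have "(\<Sum>j<m. t j w) = (t i w + t (Suc i) w) + (\<Sum>j\<in>{..<m} - {i} - {Suc i}. t j w)" for w
    using sum.remove[OF _ i1, of "\<lambda>j. t j w"] sum.remove[OF _ i2, of "\<lambda>j. t j w"]
    by (simp add: add.assoc)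
  hence "yact d Rm q m y = (\<lambda>w. \<Sum>j\<in>{..<m} - {i} - {Suc i}. t j w)"
    unfolding cancel by (simp add: yact_def t_def)
  also have "\<dots> \<in> VIdeg d Rm q m"
    unfolding t_def y_def m
    by (intro VIdeg_sum VIdeg_smult Tprod_Igens_VIdeg[OF H u x v]) auto
  finally show ?thesis unfolding y_def .
qed

lemma lin_op_yact: "lin_op (yact d Rm q k)"
  unfolding lin_op_def yact_def
  by (simp only: lin_opD[OF lin_op_Tprod]) (simp add: sum.distrib sum_distrib_left algebra_simps)

lemma yact_Tk: "f \<in> Tk d k \<Longrightarrow> yact d Rm q k f \<in> Tk d k"
  unfolding yact_def by (intro Tk_sum) (auto simp: Tprod_eq_Tchain intro!: Tk_smult Tchain_Tk)

lemma yact_Ideg_VIdeg: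
  assumes H: "is_hecke_symmetry d Rm q" and f: "f \<in> Ideg d Rm q m"
  shows "yact d Rm q m f \<in> VIdeg d Rm q m"
  using lin_op_yact f unfolding VIdeg_def
  by (rule lin_op_Ideg) (use yact_Igens_VIdeg[OF H] in \<open>simp add: VIdeg_def\<close>)

lemma Lk_iff_Ideg:
  "a \<in> Lk d Rm q n k \<longleftrightarrow> a \<in> Tk d k \<and> (\<forall>b \<in> Tk d (n - k). tmul a b \<in> Ideg d Rm q n)"
  by (simp add: Lk_def Iid_Int_Tk_eq_Ideg)

lemma Tchain_tmul_basis_vec_VIdeg:
  assumes H: "is_hecke_symmetry d Rm q" and g: "g \<in> Ideg d Rm q n" and c: "c < d"
  shows "Tchain d Rm 1 n (tmul g (basis_vec c)) \<in> VIdeg d Rm q (Suc n)"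
  using lin_op_comp[OF lin_op_Tchain lin_op_tmul_left] g unfolding VIdeg_def
proof (rule lin_op_Ideg)
  fix u x v :: "nat list \<Rightarrow> 'a" and i l
  assume u: "u \<in> Tk d i" and x: "x \<in> Kq d Rm q" and v: "v \<in> Tk d l" and n: "n = i + 2 + l"
  have "tmul (tmul u (tmul x v)) (basis_vec c) = tmul u (tmul x (tmul v (basis_vec c)))"
    using tmul_assoc[OF u tmul_Tk[OF Kq_Tk[OF x] v]] tmul_assoc[OF Kq_Tk[OF x] v] by simp
  moreover have "Tchain d Rm 1 n (tmul u (tmul x (tmul v (basis_vec c))))
      \<in> VIdeg d Rm q (i + 2 + (l + 1))"
    using n by (intro Tchain_Igens_VIdeg[OF H u x tmul_Tk[OF v basis_vec_Tk[OF c]]]) simp_all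
  ultimately show "Tchain d Rm 1 n (tmul (tmul u (tmul x v)) (basis_vec c))
      \<in> lin_span {tmul (basis_vec c) g |c g. c < d \<and> g \<in> Ideg d Rm q (Suc n - 1)}"
    using n by (simp add: VIdeg_def)
qed

text \<open>Invertibility of the T_i is used to write z = T_1 \<cdots> T_(n-k) z'.\<close>

lemma Tchain_tmul_Lk_VIdeg:
  assumes H: "is_hecke_symmetry d Rm q" and kn: "k \<le> n"
    and a: "a \<in> Tk d k" and aI: "\<And>b. b \<in> Tk d (n - k) \<Longrightarrow> tmul a b \<in> Ideg d Rm q n"
    and z: "z \<in> Tk d (Suc (n - k))"
  shows "Tchain d Rm 1 k (tmul a z) \<in> VIdeg d Rm q (Suc n)"
proof -
  obtain z' where z': "z' \<in> Tk d (Suc (n - k))" "Tchain d Rm 1 (n - k) z' = z"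
    using Tchain_surj[OF H z, of "n - k"] by auto
  have "Tchain d Rm 1 k (tmul a z) = Tchain d Rm 1 k (Tchain d Rm (1 + k) (n - k) (tmul a z'))"
    using Tchain_tmul_right[OF a order_refl, of Rm "n - k" z'] z'(2) by (simp only:)
  also have "\<dots> = Tchain d Rm 1 n (tmul a z')"
    using Tchain_add[of d Rm 1 k "n - k" "tmul a z'"] kn by simp
  also have "\<dots> = (\<lambda>w. \<Sum>e<d. Tchain d Rm 1 n (tmul (tmul a (rcoeff e z')) (basis_vec e)) w)"
    unfolding tmul_decompose_right[OF a z'(1)] by (rule lin_op_sum[OF lin_op_Tchain]) simp
  also have "\<dots> \<in> VIdeg d Rm q (Suc n)"
    by (intro VIdeg_sum Tchain_tmul_basis_vec_VIdeg[OF H] aI[OF rcoeff_Tk[OF z'(1)]]) auto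
  finally show ?thesis .
qed

lemma yact_tmul_split:
  assumes a: "a \<in> Tk d k" and b: "b \<in> Tk d l"
  shows "yact d Rm q (k + l) (tmul a b) w
    = q ^ l * tmul (yact d Rm q k a) b w
      + (\<Sum>j\<in>{k..<k + l}. (- 1) ^ j * q ^ (k + l - 1 - j) * Tprod d Rm j (tmul a b) w)"
proof -
  have low: "(- 1) ^ j * q ^ (k + l - 1 - j) * Tprod d Rm j (tmul a b) w
      = q ^ l * ((- 1) ^ j * q ^ (k - 1 - j) * tmul (Tprod d Rm j a) b w)" if "j < k" for j
  proof -
    have "k + l - 1 - j = l + (k - 1 - j)" using that by simp
    moreover have "Tprod d Rm j (tmul a b) = tmul (Tprod d Rm j a) b"
      unfolding Tprod_eq_Tchain using that by (intro Tchain_tmul_left[OF a _ _ b]) simp_all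
    ultimately show ?thesis by (simp add: power_add algebra_simps)
  qed
  have "tmul (yact d Rm q k a) b w = (\<Sum>j<k. (- 1) ^ j * q ^ (k - 1 - j) * tmul (Tprod d Rm j a) b w)"
    unfolding yact_def lin_op_sum[OF lin_op_tmul_left finite_lessThan]
    by (simp add: lin_op_smult[OF lin_op_tmul_left])
  hence "q ^ l * tmul (yact d Rm q k a) b w
      = (\<Sum>j<k. q ^ l * ((- 1) ^ j * q ^ (k - 1 - j) * tmul (Tprod d Rm j a) b w))"
    by (simp add: sum_distrib_left)
  also have "\<dots> = (\<Sum>j<k. (- 1) ^ j * q ^ (k + l - 1 - j) * Tprod d Rm j (tmul a b) w)"
    by (rule sum.cong[OF refl], rule low[symmetric]) simp
  finally have "q ^ l * tmul (yact d Rm q k a) b w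
      = (\<Sum>j<k. (- 1) ^ j * q ^ (k + l - 1 - j) * Tprod d Rm j (tmul a b) w)" .
  thus ?thesis
    unfolding yact_def using sum.atLeastLessThan_concat[of 0 k "k + l", symmetric]
    by (simp add: atLeast0LessThan)
qed

lemma yact_tmul_VIdeg:
  assumes H: "is_hecke_symmetry d Rm q" and kn: "k < n" and aL: "a \<in> Lk d Rm q n k"
    and b: "b \<in> Tk d (Suc n - k)"
  shows "tmul (yact d Rm q k a) b \<in> VIdeg d Rm q (Suc n)"
proof -
  have a: "a \<in> Tk d k" and aI: "\<And>b. b \<in> Tk d (n - k) \<Longrightarrow> tmul a b \<in> Ideg d Rm q n"
    using aL by (simp_all add: Lk_iff_Ideg)
  have b': "b \<in> Tk d (Suc (n - k))" and len: "k + Suc (n - k) = Suc n"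
    using b kn by (simp_all add: Suc_diff_le)
  have "tmul a b \<in> Ideg d Rm q (Suc n)"
    unfolding tmul_decompose_right[OF a b']
    by (intro Ideg_sum Ideg_tmul_basis_vec aI[OF rcoeff_Tk[OF b']]) auto
  hence "yact d Rm q (Suc n) (tmul a b) \<in> VIdeg d Rm q (Suc n)"
    by (rule yact_Ideg_VIdeg[OF H])
  moreover have "Tprod d Rm j (tmul a b) \<in> VIdeg d Rm q (Suc n)" if "k \<le> j" for j
  proof -
    have "Tprod d Rm j (tmul a b) = Tchain d Rm 1 k (tmul a (Tchain d Rm 1 (j - k) b))"
      using Tchain_add[of d Rm 1 k "j - k"] Tchain_tmul_right[OF a, of 1 Rm "j - k" b] that
      by (simp add: Tprod_eq_Tchain add.commute)
    thus ?thesis using Tchain_tmul_Lk_VIdeg[OF H _ a aI Tchain_Tk[OF b']] kn by simp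
  qed
  hence "(\<lambda>w. \<Sum>j\<in>{k..<Suc n}. (- 1) ^ j * q ^ (Suc n - 1 - j) * Tprod d Rm j (tmul a b) w)
      \<in> VIdeg d Rm q (Suc n)"
    by (intro VIdeg_sum VIdeg_smult) auto
  ultimately have "(\<lambda>w. q ^ Suc (n - k) * tmul (yact d Rm q k a) b w) \<in> VIdeg d Rm q (Suc n)"
    using lin_span_diff yact_tmul_split[OF a b', of Rm q] unfolding VIdeg_def len by fastforce
  hence "(\<lambda>w. inverse (q ^ Suc (n - k)) * (q ^ Suc (n - k) * tmul (yact d Rm q k a) b w))
      \<in> VIdeg d Rm q (Suc n)"
    by (rule VIdeg_smult)
  moreover have "q ^ Suc (n - k) \<noteq> 0" using hecke_q_nonzero[OF H] by simp
  ultimately show ?thesis by (simp add: field_simps)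
qed

lemma Tk_Suc_in_lin_span_basis:
  assumes y: "y \<in> Tk d (Suc p)" and S: "\<And>c. c < d \<Longrightarrow> lcoeff c y \<in> S"
  shows "y \<in> lin_span {tmul v a | v a. v \<in> Tk d 1 \<and> a \<in> S}"
  using basis_vec_Tk S
  by (subst Tk_Suc_decompose_left[OF y]) (intro lin_span_sum lin_span_base; blast)

lemma lcoeff_yact_Lk:
  assumes H: "is_hecke_symmetry d Rm q" and kn: "Suc k < n" and aL: "a \<in> Lk d Rm q n (Suc k)"
  shows "lcoeff c (yact d Rm q (Suc k) a) \<in> Lk d Rm q n k"
proof -
  have yT: "yact d Rm q (Suc k) a \<in> Tk d (Suc k)"
    using aL by (simp add: Lk_iff_Ideg yact_Tk)
  have "tmul (lcoeff c (yact d Rm q (Suc k) a)) b \<in> Ideg d Rm q n" if "b \<in> Tk d (n - k)" for b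
  proof -
    have "lcoeff c (tmul (yact d Rm q (Suc k) a) b) \<in> Ideg d Rm q (Suc n - 1)"
      using that by (intro lcoeff_VIdeg yact_tmul_VIdeg[OF H kn aL]) simp
    thus ?thesis by (simp add: lcoeff_tmul[OF yT])
  qed
  thus ?thesis using lcoeff_Tk[OF yT] by (simp add: Lk_iff_Ideg)
qed

theorem lemma4p1:
  fixes d n k :: nat and Rm :: "nat \<Rightarrow> nat \<Rightarrow> nat \<Rightarrow> nat \<Rightarrow> 'a::field" and q :: 'a
  assumes "is_hecke_symmetry d Rm q"
    and "1 < n" and "0 < k" and "k < n"
  shows "yact d Rm q k ` Lk d Rm q n k
           \<subseteq> lin_span {tmul v a | v a. v \<in> Tk d 1 \<and> a \<in> Lk d Rm q n (k - 1)}"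
proof
  fix y assume "y \<in> yact d Rm q k ` Lk d Rm q n k"
  then obtain a where y: "y = yact d Rm q k a" and aL: "a \<in> Lk d Rm q n k" by blast
  obtain k' where k': "k = Suc k'" using assms(3) by (cases k) auto
  have "y \<in> Tk d (Suc k')"
    using aL unfolding y k' by (simp add: Lk_iff_Ideg yact_Tk)
  thus "y \<in> lin_span {tmul v a | v a. v \<in> Tk d 1 \<and> a \<in> Lk d Rm q n (k - 1)}"
    using lcoeff_yact_Lk[OF assms(1)] assms(4) aL unfolding y k'
    by (intro Tk_Suc_in_lin_span_basis) simp_all
qed

end
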